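(* Fix a partition $\Delta=\{x_0<\dots<x_N\}$ of $[-\pi,\pi]$ and a scale vector $\alpha\in(-1,1)^N$. For $n\in\mathbb{N}$ let $\mathfrak{R}^\alpha_{\Delta,B_n}(2\pi)=\mathcal{F}^\alpha_{\Delta,B_n}(\mathfrak{R}(2\pi))$. Then $\bigcup_{n\in\mathbb{N}}\mathfrak{R}^\alpha_{\Delta,B_n}(2\pi)$ is dense in $\mathcal{C}(2\pi)$ (with respect to the sup norm).
   Context: Let $I=[x_0,x_N]=[-\pi,\pi]$, $N\ge2$, $\Delta=\{x_0<x_1<\dots<x_N\}$, $I_i=[x_{i-1},x_i]$, and $L_i(x)=a_ix+b_i$ the affine map of $I$ onto $I_i$ with $L_i(x_0)=x_{i-1}$, $L_i(x_N)=x_i$. For $f,b\in\mathcal{C}(I)$ with $b(x_0)=f(x_0)$, $b(x_N)=f(x_N)$ and $\alpha\in(-1,1)^N$, $f^\alpha_{\Delta,b}$ is the unique $g\in\mathcal{C}(I)$ with $g(x)=f(x)+\alpha_i(g-b)(L_i^{-1}(x))$ for $x\in I_i$, $i=1,\dots,N$. For a bounded linear $L$ with $(Lf)(x_0)=f(x_0)$, $(Lf)(x_N)=f(x_N)$, $\mathcal{F}^\alpha_{\Delta,L}(f)=f^\alpha_{\Delta,Lf}$. $B_n$ is the Bernstein operator on $I$: $B_nf(x)=\sum_{k=0}^n f\big(x_0+\tfrac{k}{n}(x_N-x_0)\big)\binom{n}{k}\frac{(x-x_0)^k(x_N-x)^{n-k}}{(x_N-x_0)^n}$. $\mathcal{C}(2\pi)=\{f\in\mathcal{C}([-\pi,\pi]):f(-\pi)=f(\pi)\}$,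 $\mathfrak{T}_m$ = real trigonometric polynomials of degree $\le m$, $\mathfrak{R}(2\pi)=\bigcup_{m,n}\{p/q:p\in\mathfrak{T}_m,q\in\mathfrak{T}_n,q>0\text{ on }[-\pi,\pi]\}$. *)

theory Defs
  imports "HOL-Analysis.Analysis"
begin

definition is_partition :: "(nat \<Rightarrow> real) \<Rightarrow> nat \<Rightarrow> bool" where
  "is_partition x N \<longleftrightarrow> N \<ge> 2 \<and> x 0 = -pi \<and> x N = pi \<and> (\<forall>i<N. x i < x (Suc i))"

text \<open>Affine map L_i of [x 0, x N] onto [x (i-1), x i], L_i(x) = a_i x + b_i.\<close>
definition affL :: "(nat \<Rightarrow> real) \<Rightarrow> nat \<Rightarrow> nat \<Rightarrow> real \<Rightarrow> real" where
  "affL x N i t = ((x i - x (i - 1)) / (x N - x 0)) * t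
                  + (x N * x (i - 1) - x 0 * x i) / (x N - x 0)"

definition affL_inv :: "(nat \<Rightarrow> real) \<Rightarrow> nat \<Rightarrow> nat \<Rightarrow> real \<Rightarrow> real" where
  "affL_inv x N i y = (y - (x N * x (i - 1) - x 0 * x i) / (x N - x 0))
                      / ((x i - x (i - 1)) / (x N - x 0))"

definition fractal_fun ::
  "(nat \<Rightarrow> real) \<Rightarrow> nat \<Rightarrow> (nat \<Rightarrow> real) \<Rightarrow> (real \<Rightarrow> real) \<Rightarrow> (real \<Rightarrow> real) \<Rightarrow> (real \<Rightarrow> real)" where
  "fractal_fun x N \<alpha> f b = (THE g. continuous_on {x 0..x N} g \<and>
      (\<forall>y. y \<notin> {x 0..x N} \<longrightarrow> g y = 0) \<and>
      (\<forall>i\<in>{1..N}. \<forall>y\<in>{x (i - 1)..x i}.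
          g y = f y + \<alpha> i * (g (affL_inv x N i y) - b (affL_inv x N i y))))"

definition bernstein :: "real \<Rightarrow> real \<Rightarrow> nat \<Rightarrow> (real \<Rightarrow> real) \<Rightarrow> real \<Rightarrow> real" where
  "bernstein a c n f t = (\<Sum>k=0..n. f (a + real k / real n * (c - a)) * real (n choose k)
        * (t - a) ^ k * (c - t) ^ (n - k) / (c - a) ^ n)"

definition fractal_op ::
  "(nat \<Rightarrow> real) \<Rightarrow> nat \<Rightarrow> (nat \<Rightarrow> real) \<Rightarrow> ((real \<Rightarrow> real) \<Rightarrow> (real \<Rightarrow> real))
     \<Rightarrow> (real \<Rightarrow> real) \<Rightarrow> (real \<Rightarrow> real)" where
  "fractal_op x N \<alpha> L f = fractal_fun x N \<alpha> f (L f)"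

definition trig_poly :: "nat \<Rightarrow> (real \<Rightarrow> real) set" where
  "trig_poly m = {p. \<exists>a b :: nat \<Rightarrow> real. \<forall>t.
       p t = a 0 + (\<Sum>k=1..m. a k * cos (real k * t) + b k * sin (real k * t))}"

definition trig_rat :: "(real \<Rightarrow> real) set" where
  "trig_rat = {r. \<exists>m n p q. p \<in> trig_poly m \<and> q \<in> trig_poly n \<and>
       (\<forall>t\<in>{-pi..pi}. q t > 0) \<and> r = (\<lambda>t. p t / q t)}"

definition fractal_trig_rat :: "(nat \<Rightarrow> real) \<Rightarrow> nat \<Rightarrow> (nat \<Rightarrow> real) \<Rightarrow> nat \<Rightarrow> (real \<Rightarrow> real) set" where
  "fractal_trig_rat x N \<alpha> n = fractal_op x N \<alpha> (bernstein (x 0) (x N) n) ` trig_rat"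

end

theory Submission
  imports Defs
begin

text \<open>Because \<open>f(-\<pi>) = f(\<pi>)\<close>, \<open>f \<circ> Arg\<close> is continuous on the unit circle, so by
  Stone--Weierstrass \<open>f\<close> is uniformly close to a trigonometric polynomial \<open>p\<close>, which is a
  trigonometric rational function. The self-referential equation defining the fractal function
  \<open>p\<^sup>\<alpha>\<close> with base \<open>b = B\<^sub>n p\<close> contracts with factor \<open>max |\<alpha>\<^sub>i| < 1\<close>; comparing
  \<open>p\<^sup>\<alpha> - p\<close> at a point where it is maximal gives
  \<open>\<parallel>p\<^sup>\<alpha> - p\<parallel> \<le> max |\<alpha>\<^sub>i| / (1 - max |\<alpha>\<^sub>i|) \<cdot> \<parallel>p - B\<^sub>n p\<parallel>\<close>,
  and \<open>B\<^sub>n p \<rightarrow> p\<close> uniformly.\<close>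

text \<open>Using phase-shifted harmonics as generators, closure under products reduces to the
  single identity \<open>cos a cos b = (cos (a + b) + cos (a - b)) / 2\<close>.\<close>

inductive_set trig_polys :: "(real \<Rightarrow> real) set" where
  harmonic: "(\<lambda>t. cos (real k * t + \<phi>)) \<in> trig_polys"
| add: "p \<in> trig_polys \<Longrightarrow> q \<in> trig_polys \<Longrightarrow> (\<lambda>t. p t + q t) \<in> trig_polys"
| scale: "p \<in> trig_polys \<Longrightarrow> (\<lambda>t. c * p t) \<in> trig_polys"

lemma trig_polys_const: "(\<lambda>t. c) \<in> trig_polys"
  using trig_polys.scale[OF trig_polys.harmonic[of 0 0]] by simp

lemma trig_polys_cos: "(\<lambda>t. cos (real k * t)) \<in> trig_polys"
  using trig_polys.harmonic[of k 0] by simp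

lemma trig_polys_sin: "(\<lambda>t. sin (real k * t)) \<in> trig_polys"
  using trig_polys.harmonic[of k "- pi / 2"] by (simp add: cos_diff)

lemma harmonic_mult_harmonic:
  "(\<lambda>t. cos (real j * t + \<phi>) * cos (real k * t + \<psi>)) \<in> trig_polys"
proof -
  have product_to_sum: "cos (real j * t + \<phi>) * cos (real k * t + \<psi>)
      = 1/2 * cos (real (j + k) * t + (\<phi> + \<psi>)) + 1/2 * cos ((real j - real k) * t + (\<phi> - \<psi>))" for t
    unfolding cos_times_cos by (simp add: algebra_simps add_divide_distrib)
  have "(\<lambda>t. cos ((real j - real k) * t + \<theta>)) \<in> trig_polys" for \<theta>
  proof (cases "k \<le> j")
    case True
    then show ?thesis using trig_polys.harmonic[of "j - k" \<theta>] by (simp add: of_nat_diff)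
  next
    case False
    have "cos ((real j - real k) * t + \<theta>) = cos (real (k - j) * t + - \<theta>)" for t
      using False cos_minus[of "real (k - j) * t + - \<theta>"] by (simp add: of_nat_diff algebra_simps)
    then show ?thesis using trig_polys.harmonic[of "k - j" "- \<theta>"] by simp
  qed
  then show ?thesis
    unfolding product_to_sum by (intro trig_polys.add trig_polys.scale trig_polys.harmonic)
qed

lemma harmonic_mult_trig_polys:
  "q \<in> trig_polys \<Longrightarrow> (\<lambda>t. cos (real j * t + \<phi>) * q t) \<in> trig_polys"
proof (induction rule: trig_polys.induct)
  case (add p q)
  then show ?case using trig_polys.add[OF add.IH] by (simp add: distrib_left)
next
  case (scale p c)
  then show ?case using trig_polys.scale[OF scale.IH, of c] by (simp add: algebra_simps)
qed (rule harmonic_mult_harmonic)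

lemma trig_polys_mult: "p \<in> trig_polys \<Longrightarrow> q \<in> trig_polys \<Longrightarrow> (\<lambda>t. p t * q t) \<in> trig_polys"
proof (induction rule: trig_polys.induct)
  case (add p1 p2)
  then show ?case using trig_polys.add[OF add.IH] by (simp add: distrib_right)
next
  case (scale p c)
  then show ?case using trig_polys.scale[OF scale.IH, of c] by (simp add: algebra_simps)
qed (rule harmonic_mult_trig_polys)

lemma continuous_on_trig_polys: "p \<in> trig_polys \<Longrightarrow> continuous_on S p"
  by (induction rule: trig_polys.induct) (auto intro!: continuous_intros)

lemma trig_poly_mono:
  assumes "p \<in> trig_poly m" "m \<le> m'"
  shows "p \<in> trig_poly m'"
proof -
  obtain a b where ab: "\<And>t. p t = a 0 + (\<Sum>k=1..m. a k * cos (real k * t) + b k * sin (real k * t))"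
    using assms(1) unfolding trig_poly_def by blast
  define a' where "a' = (\<lambda>k. if k \<le> m then a k else 0)"
  define b' where "b' = (\<lambda>k. if k \<le> m then b k else 0)"
  have "(\<Sum>k=1..m'. a' k * cos (real k * t) + b' k * sin (real k * t))
      = (\<Sum>k=1..m. a k * cos (real k * t) + b k * sin (real k * t))" for t
    by (rule sum.mono_neutral_cong_right) (use assms(2) in \<open>auto simp: a'_def b'_def\<close>)
  then have "p t = a' 0 + (\<Sum>k=1..m'. a' k * cos (real k * t) + b' k * sin (real k * t))" for t
    using ab by (simp add: a'_def)
  then show ?thesis unfolding trig_poly_def by blast
qed

lemma trig_polys_imp_trig_poly: "p \<in> trig_polys \<Longrightarrow> \<exists>m. p \<in> trig_poly m"
proof (induction rule: trig_polys.induct)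
  case (harmonic k \<phi>)
  define a where "a = (\<lambda>j. if j = k then cos \<phi> else 0)"
  define b where "b = (\<lambda>j. if j = k then - sin \<phi> else 0)"
  have "cos (real k * t + \<phi>) = a 0 + (\<Sum>j=1..k. a j * cos (real j * t) + b j * sin (real j * t))" for t
  proof -
    have "(\<Sum>j=1..k. a j * cos (real j * t) + b j * sin (real j * t))
        = (\<Sum>j\<in>{1..k}. if j = k then cos (real k * t + \<phi>) else 0)"
      by (rule sum.cong) (auto simp: a_def b_def cos_add)
    then show ?thesis by (cases "k = 0") (simp_all add: a_def)
  qed
  then show ?case unfolding trig_poly_def by blast
next
  case (add p q)
  then obtain m n where "p \<in> trig_poly (max m n)" "q \<in> trig_poly (max m n)"
    by (meson max.cobounded1 max.cobounded2 trig_poly_mono)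
  then obtain a b a' b' where
    pq: "\<And>t. p t = a 0 + (\<Sum>k=1..max m n. a k * cos (real k * t) + b k * sin (real k * t))"
        "\<And>t. q t = a' 0 + (\<Sum>k=1..max m n. a' k * cos (real k * t) + b' k * sin (real k * t))"
    unfolding trig_poly_def by blast
  have "(\<lambda>t. p t + q t) \<in> trig_poly (max m n)"
    unfolding trig_poly_def
    by (intro CollectI exI[of _ "\<lambda>k. a k + a' k"] exI[of _ "\<lambda>k. b k + b' k"] allI)
      (simp add: pq sum.distrib algebra_simps)
  then show ?case by blast
next
  case (scale p c)
  then obtain m a b where p: "\<And>t. p t = a 0 + (\<Sum>k=1..m. a k * cos (real k * t) + b k * sin (real k * t))"
    unfolding trig_poly_def by blast
  have "(\<lambda>t. c * p t) \<in> trig_poly m"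
    unfolding trig_poly_def
    by (intro CollectI exI[of _ "\<lambda>k. c * a k"] exI[of _ "\<lambda>k. c * b k"] allI)
      (simp add: p sum_distrib_left algebra_simps)
  then show ?case by blast
qed

lemma trig_polys_subset_trig_rat: "trig_polys \<subseteq> trig_rat"
proof
  fix p assume "p \<in> trig_polys"
  then obtain m where "p \<in> trig_poly m" using trig_polys_imp_trig_poly by blast
  moreover obtain n where "(\<lambda>_. 1) \<in> trig_poly n"
    using trig_polys_imp_trig_poly[OF trig_polys_const] by blast
  ultimately show "p \<in> trig_rat" unfolding trig_rat_def by force
qed

lemma continuous_on_compact_quotient:
  fixes q :: "'a::topological_space \<Rightarrow> 'b::t2_space" and g :: "'b \<Rightarrow> 'c::topological_space"
  assumes "compact S" and contq: "continuous_on S q" and contgq: "continuous_on S (g \<circ> q)"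
  shows "continuous_on (q ` S) g"
proof -
  have "closed (g -` B \<inter> q ` S)" if B: "closed B" for B
  proof -
    obtain A where "closed A" "A \<inter> S = (g \<circ> q) -` B \<inter> S"
      using continuous_on_closed_invariant[THEN iffD1, rule_format, OF contgq B] by blast
    then have "compact ((g \<circ> q) -` B \<inter> S)"
      using compact_Int_closed[OF assms(1), of A] by (simp add: Int_commute)
    moreover have "continuous_on ((g \<circ> q) -` B \<inter> S) q"
      using contq by (rule continuous_on_subset) blast
    ultimately have "compact (q ` ((g \<circ> q) -` B \<inter> S))"
      by (rule compact_continuous_image[rotated])
    moreover have "g -` B \<inter> q ` S = q ` ((g \<circ> q) -` B \<inter> S)" by auto
    ultimately show ?thesis by (simp add: compact_imp_closed)
  qed
  moreover have "closed (q ` S)"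
    by (rule compact_imp_closed[OF compact_continuous_image[OF contq assms(1)]])
  ultimately show ?thesis by (simp add: continuous_on_closed_vimage)
qed

lemma periodic_Arg_cis:
  assumes "t \<in> {-pi..pi}" and "f (-pi) = f pi"
  shows "f (Arg (cis t)) = f t"
proof (cases "t = -pi")
  case True
  have "cis (-pi) = complex_of_real (-1)" by (simp add: complex_eq_iff)
  then show ?thesis using True assms(2) Arg_of_real[of "-1"] by simp
next
  case False
  then show ?thesis using assms(1) by (simp add: Arg_cis)
qed

theorem trig_polys_dense_periodic:
  assumes contf: "continuous_on {-pi..pi} f" and per: "f (-pi) = f pi" and e: "e > 0"
  shows "\<exists>p\<in>trig_polys. \<forall>t\<in>{-pi..pi}. \<bar>f t - p t\<bar> < e"
proof -
  define S where "S = cis ` {-pi..pi}"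
  have contcis: "continuous_on {-pi..pi} cis"
    using continuous_on_cis[OF continuous_on_id] by simp
  define P where "P = (\<lambda>h. continuous_on S h \<and> (\<exists>p\<in>trig_polys. \<forall>t. h (cis t) = p t))"
  have contF: "continuous_on S (\<lambda>z. f (Arg z))"
    unfolding S_def
  proof (rule continuous_on_compact_quotient)
    show "continuous_on {-pi..pi} ((\<lambda>z. f (Arg z)) \<circ> cis)"
      using contf by (rule continuous_on_eq) (simp add: periodic_Arg_cis per)
  qed (fact compact_Icc contcis)+
  have "\<exists>h. P h \<and> (\<forall>z\<in>S. \<bar>f (Arg z) - h z\<bar> < e)"
  proof (rule Stone_Weierstrass_HOL[OF _ _ _ _ _ _ contF e])
    show "compact S" unfolding S_def by (rule compact_continuous_image[OF contcis compact_Icc])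
    show "P (\<lambda>_. c)" for c unfolding P_def by (auto intro: trig_polys_const)
    show "P h \<Longrightarrow> continuous_on S h" for h by (simp add: P_def)
    show "P (\<lambda>z. h z + k z)" "P (\<lambda>z. h z * k z)" if hk: "P h \<and> P k" for h k
    proof -
      obtain p q where "p \<in> trig_polys" "q \<in> trig_polys" "\<And>t. h (cis t) = p t" "\<And>t. k (cis t) = q t"
        "continuous_on S h" "continuous_on S k"
        using hk unfolding P_def by blast
      then show "P (\<lambda>z. h z + k z)" "P (\<lambda>z. h z * k z)"
        unfolding P_def by (auto intro!: continuous_intros trig_polys.add trig_polys_mult)
    qed
    have "P Re" "P Im"
      unfolding P_def using trig_polys_cos[of 1] trig_polys_sin[of 1] by (auto intro!: continuous_intros)
    moreover have "Re z \<noteq> Re w \<or> Im z \<noteq> Im w" if "z \<noteq> w" for z w :: complex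
      using that complex_eqI by blast
    ultimately show "\<exists>h. P h \<and> h z \<noteq> h w" if "z \<in> S \<and> w \<in> S \<and> z \<noteq> w" for z w
      using that by blast
  qed
  then obtain h p where h: "\<forall>z\<in>S. \<bar>f (Arg z) - h z\<bar> < e"
    and "p \<in> trig_polys" "\<And>t. h (cis t) = p t"
    unfolding P_def by blast
  moreover have "\<bar>f t - p t\<bar> < e" if "t \<in> {-pi..pi}" for t
    using h[rule_format, of "cis t"] that periodic_Arg_cis[OF that per] \<open>h (cis t) = p t\<close>
    by (simp add: S_def)
  ultimately show ?thesis by blast
qed

lemma continuous_on_bernstein: "a \<noteq> c \<Longrightarrow> continuous_on S (bernstein a c n r)"
  unfolding bernstein_def by (intro continuous_intros) auto

lemma bernstein_left_endpoint: "a \<noteq> c \<Longrightarrow> bernstein a c n r a = r a"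
proof -
  assume "a \<noteq> c"
  then have "bernstein a c n r a = (\<Sum>k=0..n. if k = 0 then r a else 0)"
    unfolding bernstein_def by (intro sum.cong) (auto simp: power_0_left)
  then show ?thesis by simp
qed

lemma bernstein_right_endpoint: "a \<noteq> c \<Longrightarrow> 1 \<le> n \<Longrightarrow> bernstein a c n r c = r c"
proof -
  assume "a \<noteq> c" "1 \<le> n"
  then have "bernstein a c n r c = (\<Sum>k=0..n. if k = n then r c else 0)"
    unfolding bernstein_def by (intro sum.cong) (auto simp: power_0_left)
  then show ?thesis by simp
qed

lemma bernstein_uniform_approx:
  assumes ac: "a < c" and contr: "continuous_on {a..c} r" and e: "e > 0"
  shows "\<exists>n0. \<forall>n\<ge>n0. \<forall>t\<in>{a..c}. \<bar>r t - bernstein a c n r t\<bar> < e"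
proof -
  define \<phi> where "\<phi> = (\<lambda>s. r (a + s * (c - a)))"
  have "a + s * (c - a) \<in> {a..c}" if "s \<in> {0..1}" for s
  proof -
    have "s * (c - a) \<le> c - a" using that ac by (intro mult_left_le_one_le) auto
    moreover have "0 \<le> s * (c - a)" using that ac by simp
    ultimately show ?thesis by simp
  qed
  then have "(\<lambda>s. a + s * (c - a)) ` {0..1} \<subseteq> {a..c}" by blast
  then have "continuous_on {0..1} \<phi>"
    unfolding \<phi>_def by (intro continuous_on_compose2[OF contr] continuous_intros)
  from Bernstein_Weierstrass[OF this e] obtain n0 where
    n0: "\<And>n s. n0 \<le> n \<Longrightarrow> s \<in> {0..1} \<Longrightarrow> \<bar>\<phi> s - (\<Sum>k\<le>n. \<phi> (real k / real n) * Bernstein n k s)\<bar> < e"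
    by blast
  have "\<bar>r t - bernstein a c n r t\<bar> < e" if n: "n0 \<le> n" and t: "t \<in> {a..c}" for n t
  proof -
    define s where "s = (t - a) / (c - a)"
    have s: "s \<in> {0..1}" "\<phi> s = r t"
      using t ac by (auto simp: s_def \<phi>_def divide_le_eq_1)
    have "bernstein a c n r t = (\<Sum>k\<le>n. \<phi> (real k / real n) * Bernstein n k s)"
      unfolding bernstein_def atMost_atLeast0
    proof (rule sum.cong[OF refl])
      fix k assume "k \<in> {0..n}"
      then have "(c - a) ^ n = (c - a) ^ k * (c - a) ^ (n - k)" by (simp flip: power_add)
      moreover have "1 - s = (c - t) / (c - a)" using ac by (simp add: s_def field_simps)
      ultimately show "r (a + real k / real n * (c - a)) * real (n choose k) * (t - a) ^ k
          * (c - t) ^ (n - k) / (c - a) ^ n = \<phi> (real k / real n) * Bernstein n k s"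
        by (simp add: \<phi>_def Bernstein_def s_def power_divide)
    qed
    then show ?thesis using n0[OF n s(1)] s(2) by simp
  qed
  then show ?thesis by blast
qed

lemma abs_le_of_contractive_step:
  fixes h :: "'a::topological_space \<Rightarrow> real"
  assumes "compact S" "S \<noteq> {}" "continuous_on S h" "0 \<le> M" "M < 1"
    and step: "\<forall>y\<in>S. \<exists>z\<in>S. \<bar>h y\<bar> \<le> M * (\<bar>h z\<bar> + D)"
  shows "\<forall>y\<in>S. \<bar>h y\<bar> \<le> M * D / (1 - M)"
proof -
  obtain y0 where y0: "y0 \<in> S" and max: "\<And>y. y \<in> S \<Longrightarrow> \<bar>h y\<bar> \<le> \<bar>h y0\<bar>"
    using continuous_attains_sup[of S "\<lambda>y. \<bar>h y\<bar>"] assms(1-3) by (auto intro: continuous_intros)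
  obtain z where "z \<in> S" "\<bar>h y0\<bar> \<le> M * (\<bar>h z\<bar> + D)" using step y0 by blast
  then have "\<bar>h y0\<bar> \<le> M * (\<bar>h y0\<bar> + D)"
    using max[of z] mult_left_mono[of "\<bar>h z\<bar> + D" "\<bar>h y0\<bar> + D" M] assms(4) by linarith
  then have "\<bar>h y0\<bar> \<le> M * D / (1 - M)"
    using assms(5) by (simp add: field_simps)
  then show ?thesis using max by fastforce
qed

lemma uniform_limit_of_geometric_steps:
  fixes G :: "nat \<Rightarrow> 'a \<Rightarrow> 'b::banach"
  assumes "0 \<le> M" "M < 1" and steps: "\<And>k y. y \<in> S \<Longrightarrow> norm (G (Suc k) y - G k y) \<le> D * M ^ k"
  shows "\<exists>g. uniform_limit S G g sequentially"
proof -
  have "summable (\<lambda>k. D * M ^ k)"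
    using assms(1,2) by (intro summable_mult summable_geometric) auto
  then have "uniform_limit S (\<lambda>n y. \<Sum>k<n. G (Suc k) y - G k y) (\<lambda>y. \<Sum>k. G (Suc k) y - G k y) sequentially"
    using steps by (rule Weierstrass_m_test[rotated])
  from uniform_limit_add[OF uniform_limit_const[of "\<lambda>y. G 0 y"] this]
  have "uniform_limit S (\<lambda>n y. G 0 y + (\<Sum>k<n. G (Suc k) y - G k y)) (\<lambda>y. G 0 y + (\<Sum>k. G (Suc k) y - G k y)) sequentially" .
  moreover have "G 0 y + (\<Sum>k<n. G (Suc k) y - G k y) = G n y" for n y
    using sum_lessThan_telescope[of "\<lambda>k. G k y" n] by simp
  ultimately show ?thesis by auto
qed

locale fractal_partition =
  fixes x :: "nat \<Rightarrow> real" and N :: nat and \<alpha> :: "nat \<Rightarrow> real"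
  assumes N_pos: "1 \<le> N" and x_step: "\<forall>i<N. x i < x (Suc i)"
    and alpha_bound: "\<forall>i\<in>{1..N}. \<alpha> i \<in> {-1<..<1}"
begin

lemma x_less: "i < j \<Longrightarrow> j \<le> N \<Longrightarrow> x i < x j"
proof (induction j)
  case (Suc j)
  then have "x j < x (Suc j)" using x_step by simp
  then show ?case using Suc by (cases "i = j") auto
qed simp

lemma x_le: "i \<le> j \<Longrightarrow> j \<le> N \<Longrightarrow> x i \<le> x j"
  using x_less by (cases "i = j") (auto simp: less_imp_le)

lemma x_0_less_x_N: "x 0 < x N"
  using x_less N_pos by simp

lemma piece_subset: "i \<in> {1..N} \<Longrightarrow> {x (i - 1)..x i} \<subseteq> {x 0..x N}"
  using x_le by auto

definition alpha_max :: real where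
  "alpha_max = Max ((\<lambda>i. \<bar>\<alpha> i\<bar>) ` {1..N})"

lemma abs_alpha_le_alpha_max: "i \<in> {1..N} \<Longrightarrow> \<bar>\<alpha> i\<bar> \<le> alpha_max"
  unfolding alpha_max_def by (intro Max_ge) auto

lemma alpha_max_nonneg: "0 \<le> alpha_max"
  using abs_alpha_le_alpha_max[of 1] N_pos by auto

lemma alpha_max_less_1: "alpha_max < 1"
proof -
  have "alpha_max \<in> (\<lambda>i. \<bar>\<alpha> i\<bar>) ` {1..N}"
    unfolding alpha_max_def using N_pos by (intro Max_in) auto
  then show ?thesis using alpha_bound by auto
qed

lemma affL_inv_eq:
  assumes "i \<in> {1..N}"
  shows "affL_inv x N i y = x 0 + (y - x (i - 1)) * ((x N - x 0) / (x i - x (i - 1)))"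
proof -
  have "x (i - 1) < x i" "x 0 < x N" using assms x_less[of "i - 1" i] x_0_less_x_N by auto
  then show ?thesis unfolding affL_inv_def by (simp add: divide_simps) (simp add: algebra_simps)
qed

lemma affL_inv_left: "i \<in> {1..N} \<Longrightarrow> affL_inv x N i (x (i - 1)) = x 0"
  by (simp add: affL_inv_eq)

lemma affL_inv_right: "i \<in> {1..N} \<Longrightarrow> affL_inv x N i (x i) = x N"
  using x_less[of "i - 1" i] by (simp add: affL_inv_eq)

lemma affL_inv_mem:
  assumes i: "i \<in> {1..N}" and y: "y \<in> {x (i - 1)..x i}"
  shows "affL_inv x N i y \<in> {x 0..x N}"
proof -
  define q where "q = (x N - x 0) / (x i - x (i - 1))"
  have eq: "affL_inv x N i y = x 0 + (y - x (i - 1)) * q"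
    by (simp add: affL_inv_eq[OF i] q_def)
  have "x (i - 1) < x i" using i x_less[of "i - 1" i] by auto
  then have "0 < q" "(x i - x (i - 1)) * q = x N - x 0" using x_0_less_x_N by (auto simp: q_def)
  moreover have "(y - x (i - 1)) * q \<le> (x i - x (i - 1)) * q"
    using y \<open>0 < q\<close> by (intro mult_right_mono) auto
  moreover have "0 \<le> (y - x (i - 1)) * q" using y \<open>0 < q\<close> by simp
  ultimately show ?thesis unfolding eq atLeastAtMost_iff by linarith
qed

lemma continuous_on_affL_inv: "i \<in> {1..N} \<Longrightarrow> continuous_on S (affL_inv x N i)"
  unfolding affL_inv_def using x_0_less_x_N x_less[of "i - 1" i]
  by (intro continuous_intros) auto

definition piece :: "real \<Rightarrow> nat" where
  "piece y = (LEAST i. 1 \<le> i \<and> y \<le> x i)"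

lemma piece_bounds:
  assumes y: "y \<in> {x 0..x N}"
  shows "piece y \<in> {1..N}" "y \<in> {x (piece y - 1)..x (piece y)}"
proof -
  have "1 \<le> N \<and> y \<le> x N" using N_pos y by simp
  then have least: "1 \<le> piece y \<and> y \<le> x (piece y)" "piece y \<le> N"
    unfolding piece_def by (rule LeastI, rule Least_le)
  then show "piece y \<in> {1..N}" by simp
  have "x (piece y - 1) \<le> y"
  proof (cases "piece y = 1")
    case False
    then have "\<not> (1 \<le> piece y - 1 \<and> y \<le> x (piece y - 1))"
      using least(1) not_less_Least[of "piece y - 1" "\<lambda>i. 1 \<le> i \<and> y \<le> x i"]
      unfolding piece_def by linarith
    then show ?thesis using False least(1) by auto
  qed (use y in simp)
  then show "y \<in> {x (piece y - 1)..x (piece y)}" using least by simp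
qed

lemma interval_eq_Union_pieces: "{x 0..x N} = (\<Union>i\<in>{1..N}. {x (i - 1)..x i})"
  using piece_bounds piece_subset by blast

definition fractal_eqn :: "(real \<Rightarrow> real) \<Rightarrow> (real \<Rightarrow> real) \<Rightarrow> (real \<Rightarrow> real) \<Rightarrow> bool" where
  "fractal_eqn f b g \<longleftrightarrow> continuous_on {x 0..x N} g \<and>
      (\<forall>y. y \<notin> {x 0..x N} \<longrightarrow> g y = 0) \<and>
      (\<forall>i\<in>{1..N}. \<forall>y\<in>{x (i - 1)..x i}.
          g y = f y + \<alpha> i * (g (affL_inv x N i y) - b (affL_inv x N i y)))"

lemma fractal_eqnD:
  "fractal_eqn f b g \<Longrightarrow> i \<in> {1..N} \<Longrightarrow> y \<in> {x (i - 1)..x i}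
    \<Longrightarrow> g y = f y + \<alpha> i * (g (affL_inv x N i y) - b (affL_inv x N i y))"
  unfolding fractal_eqn_def by blast

lemma fractal_eqn_unique:
  assumes g1: "fractal_eqn f b g1" and g2: "fractal_eqn f b g2"
  shows "g1 = g2"
proof -
  have "\<forall>y\<in>{x 0..x N}. \<bar>g1 y - g2 y\<bar> \<le> alpha_max * 0 / (1 - alpha_max)"
  proof (rule abs_le_of_contractive_step)
    show "continuous_on {x 0..x N} (\<lambda>y. g1 y - g2 y)"
      using g1 g2 unfolding fractal_eqn_def by (intro continuous_intros) auto
    show "\<forall>y\<in>{x 0..x N}. \<exists>z\<in>{x 0..x N}. \<bar>g1 y - g2 y\<bar> \<le> alpha_max * (\<bar>g1 z - g2 z\<bar> + 0)"
    proof
      fix y assume y: "y \<in> {x 0..x N}"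
      define i z where "i = piece y" and "z = affL_inv x N i y"
      have i: "i \<in> {1..N}" "y \<in> {x (i - 1)..x i}" using piece_bounds[OF y] by (simp_all add: i_def)
      then have "z \<in> {x 0..x N}" unfolding z_def by (rule affL_inv_mem)
      moreover have "g1 y - g2 y = \<alpha> i * (g1 z - g2 z)"
        using fractal_eqnD[OF g1 i] fractal_eqnD[OF g2 i] unfolding z_def by (simp add: algebra_simps)
      ultimately show "\<exists>z\<in>{x 0..x N}. \<bar>g1 y - g2 y\<bar> \<le> alpha_max * (\<bar>g1 z - g2 z\<bar> + 0)"
        using abs_alpha_le_alpha_max[OF i(1)] by (intro bexI[of _ z]) (auto simp: abs_mult intro!: mult_right_mono)
    qed
  qed (use x_0_less_x_N alpha_max_nonneg alpha_max_less_1 in auto)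
  moreover have "g1 y = g2 y" if "y \<notin> {x 0..x N}" for y
    using g1 g2 that unfolding fractal_eqn_def by simp
  ultimately show ?thesis by force
qed

text \<open>The Read--Bajraktarevic operator, whose fixed point is the fractal function. Points shared by
  two pieces are assigned to the left one; by \<open>rb_op_eq\<close> the choice is immaterial once \<open>g\<close>
  agrees with \<open>b\<close> at \<open>x 0\<close> and \<open>x N\<close>.\<close>

definition rb_op :: "(real \<Rightarrow> real) \<Rightarrow> (real \<Rightarrow> real) \<Rightarrow> (real \<Rightarrow> real) \<Rightarrow> real \<Rightarrow> real" where
  "rb_op f b g y = f y + \<alpha> (piece y) * (g (affL_inv x N (piece y) y) - b (affL_inv x N (piece y) y))"

lemma rb_op_eq:
  assumes j: "j \<in> {1..N}" and y: "y \<in> {x (j - 1)..x j}"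
    and ends: "g (x 0) = b (x 0)" "g (x N) = b (x N)"
  shows "rb_op f b g y = f y + \<alpha> j * (g (affL_inv x N j y) - b (affL_inv x N j y))"
proof (cases "piece y = j")
  case False
  have i: "piece y \<in> {1..N}" "y \<in> {x (piece y - 1)..x (piece y)}"
    using piece_bounds piece_subset[OF j] y by blast+
  have "piece y \<le> j" unfolding piece_def by (rule Least_le) (use j y in auto)
  with False have "piece y < j" by simp
  then have "piece y = j - 1" "y = x (j - 1)"
    using i y j x_less[of "piece y" "j - 1"] x_le[of "piece y" "j - 1"] by fastforce+
  then have "affL_inv x N (piece y) y = x N" "affL_inv x N j y = x 0"
    using affL_inv_right[OF i(1)] affL_inv_left[OF j] by simp_all
  then show ?thesis using ends by (simp add: rb_op_def)
qed (simp add: rb_op_def)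

lemma rb_op_endpoints:
  assumes ends: "g (x 0) = b (x 0)" "g (x N) = b (x N)"
  shows "rb_op f b g (x 0) = f (x 0)" "rb_op f b g (x N) = f (x N)"
proof -
  have "1 \<in> {1..N}" "x 0 \<in> {x (1 - 1)..x 1}" using N_pos x_le[of 0 1] by auto
  from rb_op_eq[OF this ends] affL_inv_left[OF this(1)]
  show "rb_op f b g (x 0) = f (x 0)" using ends by simp
  have "N \<in> {1..N}" "x N \<in> {x (N - 1)..x N}" using N_pos x_le[of "N - 1" N] by auto
  from rb_op_eq[OF this ends] affL_inv_right[OF this(1)]
  show "rb_op f b g (x N) = f (x N)" using ends by simp
qed

lemma continuous_on_rb_op:
  assumes "continuous_on {x 0..x N} f" "continuous_on {x 0..x N} b" "continuous_on {x 0..x N} g"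
    and ends: "g (x 0) = b (x 0)" "g (x N) = b (x N)"
  shows "continuous_on {x 0..x N} (rb_op f b g)"
  unfolding interval_eq_Union_pieces
proof (rule continuous_on_closed_Union)
  fix j assume j: "j \<in> {1..N}"
  have maps: "affL_inv x N j ` {x (j - 1)..x j} \<subseteq> {x 0..x N}"
    using affL_inv_mem[OF j] by blast
  have "continuous_on {x (j - 1)..x j} (\<lambda>y. f y + \<alpha> j * (g (affL_inv x N j y) - b (affL_inv x N j y)))"
    by (intro continuous_intros continuous_on_subset[OF assms(1) piece_subset[OF j]]
        continuous_on_compose2[OF assms(3) continuous_on_affL_inv[OF j] maps]
        continuous_on_compose2[OF assms(2) continuous_on_affL_inv[OF j] maps])
  then show "continuous_on {x (j - 1)..x j} (rb_op f b g)"
    by (rule continuous_on_eq) (use rb_op_eq[OF j _ ends] in simp)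
qed auto

lemma abs_rb_op_diff_le:
  assumes "\<forall>z\<in>{x 0..x N}. \<bar>g1 z - g2 z\<bar> \<le> c" and y: "y \<in> {x 0..x N}"
  shows "\<bar>rb_op f b g1 y - rb_op f b g2 y\<bar> \<le> alpha_max * c"
proof -
  define z where "z = affL_inv x N (piece y) y"
  have "z \<in> {x 0..x N}" unfolding z_def using piece_bounds[OF y] by (intro affL_inv_mem)
  then have "\<bar>\<alpha> (piece y)\<bar> * \<bar>g1 z - g2 z\<bar> \<le> alpha_max * c"
    using assms abs_alpha_le_alpha_max piece_bounds[OF y] alpha_max_nonneg by (intro mult_mono) auto
  moreover have "rb_op f b g1 y - rb_op f b g2 y = \<alpha> (piece y) * (g1 z - g2 z)"
    by (simp add: rb_op_def z_def algebra_simps)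
  ultimately show ?thesis by (simp add: abs_mult)
qed

lemma fractal_eqn_of_uniform_limit:
  assumes iter: "\<And>k. G (Suc k) = rb_op f b (G k)"
    and ends: "\<And>k. G k (x 0) = b (x 0)" "\<And>k. G k (x N) = b (x N)"
    and cont: "\<And>k. continuous_on {x 0..x N} (G k)"
    and lim: "uniform_limit {x 0..x N} G g sequentially"
  shows "fractal_eqn f b (\<lambda>y. if y \<in> {x 0..x N} then g y else 0)"
  unfolding fractal_eqn_def
proof (intro conjI allI impI ballI)
  have "continuous_on {x 0..x N} g"
    using lim by (rule uniform_limit_theorem[rotated]) (auto intro: always_eventually cont)
  then show "continuous_on {x 0..x N} (\<lambda>y. if y \<in> {x 0..x N} then g y else 0)"
    by (rule continuous_on_eq) simp
  fix i y assume i: "i \<in> {1..N}" and y: "y \<in> {x (i - 1)..x i}"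
  define z where "z = affL_inv x N i y"
  have yz: "y \<in> {x 0..x N}" "z \<in> {x 0..x N}"
    using piece_subset[OF i] y affL_inv_mem[OF i y] by (auto simp: z_def)
  have "(\<lambda>k. G (Suc k) y) \<longlonglongrightarrow> g y"
    using tendsto_uniform_limitI[OF lim yz(1)] by (rule LIMSEQ_Suc)
  moreover have "(\<lambda>k. G (Suc k) y) \<longlonglongrightarrow> f y + \<alpha> i * (g z - b z)"
    unfolding iter rb_op_eq[OF i y ends] z_def[symmetric]
    by (intro tendsto_intros tendsto_uniform_limitI[OF lim yz(2)])
  ultimately have "g y = f y + \<alpha> i * (g z - b z)" by (rule LIMSEQ_unique)
  then show "(if y \<in> {x 0..x N} then g y else 0) = f y + \<alpha> i *
      ((if affL_inv x N i y \<in> {x 0..x N} then g (affL_inv x N i y) else 0) - b (affL_inv x N i y))"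
    using yz by (simp add: z_def)
qed auto

lemma fractal_eqn_exists:
  assumes cf: "continuous_on {x 0..x N} f" and cb: "continuous_on {x 0..x N} b"
    and ends: "b (x 0) = f (x 0)" "b (x N) = f (x N)"
  shows "\<exists>g. fractal_eqn f b g"
proof -
  define G where "G k = (rb_op f b ^^ k) f" for k
  have iter: "G (Suc k) = rb_op f b (G k)" for k by (simp add: G_def)
  have inv: "continuous_on {x 0..x N} (G k) \<and> G k (x 0) = b (x 0) \<and> G k (x N) = b (x N)" for k
  proof (induction k)
    case 0
    then show ?case using cf ends by (simp add: G_def)
  next
    case (Suc k)
    then show ?case using continuous_on_rb_op[OF cf cb] rb_op_endpoints[of "G k" b f] ends
      by (simp add: iter)
  qed
  have "continuous_on {x 0..x N} (\<lambda>y. G 1 y - G 0 y)"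
    using inv by (intro continuous_intros) auto
  then have "bounded ((\<lambda>y. G 1 y - G 0 y) ` {x 0..x N})"
    by (intro compact_imp_bounded compact_continuous_image compact_Icc)
  then obtain D where D: "\<forall>y\<in>{x 0..x N}. \<bar>G 1 y - G 0 y\<bar> \<le> D"
    unfolding bounded_iff by auto
  have steps: "\<forall>y\<in>{x 0..x N}. \<bar>G (Suc k) y - G k y\<bar> \<le> D * alpha_max ^ k" for k
  proof (induction k)
    case (Suc k)
    have "\<bar>rb_op f b (G (Suc k)) y - rb_op f b (G k) y\<bar> \<le> alpha_max * (D * alpha_max ^ k)"
      if "y \<in> {x 0..x N}" for y
      by (rule abs_rb_op_diff_le[OF Suc that])
    then show ?case by (simp add: iter mult.left_commute)
  qed (use D in simp)
  have "\<exists>g. uniform_limit {x 0..x N} G g sequentially"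
    by (rule uniform_limit_of_geometric_steps[OF alpha_max_nonneg alpha_max_less_1, of _ _ D]) (use steps in simp)
  then obtain g where "uniform_limit {x 0..x N} G g sequentially" ..
  then show ?thesis using fractal_eqn_of_uniform_limit[of G f b, OF iter] inv by blast
qed

lemma fractal_fun_eqn:
  assumes "continuous_on {x 0..x N} f" "continuous_on {x 0..x N} b"
    and "b (x 0) = f (x 0)" "b (x N) = f (x N)"
  shows "fractal_eqn f b (fractal_fun x N \<alpha> f b)"
proof -
  have "fractal_fun x N \<alpha> f b = (THE g. fractal_eqn f b g)"
    unfolding fractal_fun_def fractal_eqn_def ..
  moreover have "\<exists>!g. fractal_eqn f b g"
    using fractal_eqn_exists[OF assms] fractal_eqn_unique by blast
  ultimately show ?thesis by (simp add: theI')
qed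

lemma fractal_fun_dist:
  assumes cf: "continuous_on {x 0..x N} f" and cb: "continuous_on {x 0..x N} b"
    and ends: "b (x 0) = f (x 0)" "b (x N) = f (x N)"
    and D: "\<forall>y\<in>{x 0..x N}. \<bar>f y - b y\<bar> \<le> D"
  shows "\<forall>y\<in>{x 0..x N}. \<bar>fractal_fun x N \<alpha> f b y - f y\<bar> \<le> alpha_max * D / (1 - alpha_max)"
proof (rule abs_le_of_contractive_step)
  define g where "g = fractal_fun x N \<alpha> f b"
  have g: "fractal_eqn f b g" unfolding g_def by (rule fractal_fun_eqn[OF assms(1-4)])
  then show "continuous_on {x 0..x N} (\<lambda>y. fractal_fun x N \<alpha> f b y - f y)"
    using cf unfolding fractal_eqn_def g_def by (intro continuous_intros) auto
  show "\<forall>y\<in>{x 0..x N}. \<exists>z\<in>{x 0..x N}.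
      \<bar>fractal_fun x N \<alpha> f b y - f y\<bar> \<le> alpha_max * (\<bar>fractal_fun x N \<alpha> f b z - f z\<bar> + D)"
  proof
    fix y assume y: "y \<in> {x 0..x N}"
    define i z where "i = piece y" and "z = affL_inv x N i y"
    have i: "i \<in> {1..N}" "y \<in> {x (i - 1)..x i}" using piece_bounds[OF y] by (simp_all add: i_def)
    then have z: "z \<in> {x 0..x N}" unfolding z_def by (rule affL_inv_mem)
    have eq: "g y - f y = \<alpha> i * ((g z - f z) + (f z - b z))"
      using fractal_eqnD[OF g i] unfolding z_def by simp
    have "\<bar>(g z - f z) + (f z - b z)\<bar> \<le> \<bar>g z - f z\<bar> + D"
      using abs_triangle_ineq[of "g z - f z" "f z - b z"] D z by fastforce
    then have "\<bar>g y - f y\<bar> \<le> alpha_max * (\<bar>g z - f z\<bar> + D)"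
      unfolding eq abs_mult using abs_alpha_le_alpha_max[OF i(1)] alpha_max_nonneg
      by (intro mult_mono) auto
    then show "\<exists>z\<in>{x 0..x N}. \<bar>fractal_fun x N \<alpha> f b y - f y\<bar> \<le> alpha_max * (\<bar>fractal_fun x N \<alpha> f b z - f z\<bar> + D)"
      using z unfolding g_def by blast
  qed
qed (use x_0_less_x_N alpha_max_nonneg alpha_max_less_1 in auto)

lemma fractal_fun_bernstein_approx:
  assumes cp: "continuous_on {x 0..x N} p" and e: "e > 0"
  shows "\<exists>n\<ge>1. \<forall>y\<in>{x 0..x N}. \<bar>fractal_fun x N \<alpha> p (bernstein (x 0) (x N) n p) y - p y\<bar> < e"
proof -
  define \<delta> where "\<delta> = e * (1 - alpha_max)"
  have "\<delta> > 0" using e alpha_max_less_1 by (simp add: \<delta>_def)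
  then obtain n0 where n0: "\<And>n y. n \<ge> n0 \<Longrightarrow> y \<in> {x 0..x N} \<Longrightarrow> \<bar>p y - bernstein (x 0) (x N) n p y\<bar> < \<delta>"
    using bernstein_uniform_approx[OF x_0_less_x_N cp] by blast
  define n where "n = max n0 1"
  define b where "b = bernstein (x 0) (x N) n p"
  have ne: "x 0 \<noteq> x N" using x_0_less_x_N by simp
  have "\<forall>y\<in>{x 0..x N}. \<bar>fractal_fun x N \<alpha> p b y - p y\<bar> \<le> alpha_max * \<delta> / (1 - alpha_max)"
  proof (rule fractal_fun_dist[OF cp])
    show "continuous_on {x 0..x N} b" unfolding b_def by (rule continuous_on_bernstein[OF ne])
    show "b (x 0) = p (x 0)" unfolding b_def by (rule bernstein_left_endpoint[OF ne])
    show "b (x N) = p (x N)" unfolding b_def by (rule bernstein_right_endpoint[OF ne]) (simp add: n_def)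
    show "\<forall>y\<in>{x 0..x N}. \<bar>p y - b y\<bar> \<le> \<delta>" using n0 unfolding b_def n_def by (simp add: less_imp_le)
  qed
  moreover have "alpha_max * \<delta> / (1 - alpha_max) < e"
    using e alpha_max_less_1 by (simp add: \<delta>_def)
  ultimately have "\<forall>y\<in>{x 0..x N}. \<bar>fractal_fun x N \<alpha> p b y - p y\<bar> < e" by fastforce
  moreover have "1 \<le> n" by (simp add: n_def)
  ultimately show ?thesis unfolding b_def by blast
qed

end

theorem mainTheorem3:
  fixes x :: "nat \<Rightarrow> real" and N :: nat and \<alpha> :: "nat \<Rightarrow> real"
  assumes "is_partition x N"
    and "\<forall>i\<in>{1..N}. \<alpha> i \<in> {-1<..<1}"
  shows "\<forall>f. continuous_on {-pi..pi} f \<and> f (-pi) = f pi \<longrightarrow>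
           (\<forall>\<epsilon>>0. \<exists>g\<in>(\<Union>n\<in>{1..}. fractal_trig_rat x N \<alpha> n).
              \<forall>t\<in>{-pi..pi}. \<bar>f t - g t\<bar> < \<epsilon>)"
proof (intro allI impI)
  fix f :: "real \<Rightarrow> real" and \<epsilon> :: real
  assume f: "continuous_on {-pi..pi} f \<and> f (-pi) = f pi" and "\<epsilon> > 0"
  have ends: "x 0 = -pi" "x N = pi" and "N \<ge> 2" "\<forall>i<N. x i < x (Suc i)"
    using assms(1) unfolding is_partition_def by auto
  then interpret fractal_partition x N \<alpha> using assms(2) by unfold_locales auto
  obtain p where p: "p \<in> trig_polys" "\<forall>t\<in>{-pi..pi}. \<bar>f t - p t\<bar> < \<epsilon> / 2"
    using trig_polys_dense_periodic[of f "\<epsilon> / 2"] f \<open>\<epsilon> > 0\<close> by auto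
  obtain n where "1 \<le> n"
    and n: "\<forall>t\<in>{-pi..pi}. \<bar>fractal_fun x N \<alpha> p (bernstein (x 0) (x N) n p) t - p t\<bar> < \<epsilon> / 2"
    using fractal_fun_bernstein_approx[OF continuous_on_trig_polys[OF p(1)], of "\<epsilon> / 2"] \<open>\<epsilon> > 0\<close>
    unfolding ends by auto
  define g where "g = fractal_fun x N \<alpha> p (bernstein (x 0) (x N) n p)"
  have "g \<in> fractal_trig_rat x N \<alpha> n"
    unfolding g_def fractal_trig_rat_def fractal_op_def using trig_polys_subset_trig_rat p(1) by blast
  moreover have "\<bar>f t - g t\<bar> < \<epsilon>" if "t \<in> {-pi..pi}" for t
    using p(2)[rule_format, OF that] n[rule_format, OF that] unfolding g_def abs_less_iff by linarith
  ultimately show "\<exists>g\<in>(\<Union>n\<in>{1..}. fractal_trig_rat x N \<alpha> n). \<forall>t\<in>{-pi..pi}. \<bar>f t - g t\<bar> < \<epsilon>"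
    using \<open>1 \<le> n\<close> by blast
qed

end
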